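(* Let $M$ be a complete pointed metric space and $Y$ an infinite-dimensional real Banach space. Then there exists a complete pointed metric space $M'$ such that (i) $\mathrm{A}(M',Y)\subsetneqq\mathrm{Lip}_0(M',Y)$; (ii) $M'\setminus M$ is countable; (iii) $M\subseteq M'$ and the metric of $M'$ restricted to $M$ is the metric of $M$.
   Context: Throughout, metric spaces are complete and pointed, with base point $0$. $\mathrm{Lip}_0(M,Y)$ is the Banach space of Lipschitz maps $f:M\to Y$ with $f(0)=0$, normed by $\|f\|=\sup_{p\neq q}\|f(p)-f(q)\|/d(p,q)$. A map $f$ attains its norm toward $y\in Y$ if there is a sequence $(p_n,q_n)$ in $M\times M$ with $p_n\neq q_n$ such that $[f(p_n)-f(q_n)]/d(p_n,q_n)\to y$ and $\|y\|=\|f\|$; $\mathrm{A}(M,Y)$ is the set of $f$ attaining their norm toward some vector. *)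

theory Defs
  imports "HOL-Analysis.Analysis"
begin

definition complete_pointed_mspace :: "'a set \<Rightarrow> ('a \<Rightarrow> 'a \<Rightarrow> real) \<Rightarrow> 'a \<Rightarrow> bool" where
  "complete_pointed_mspace M d z \<longleftrightarrow> Metric_space M d \<and> Metric_space.mcomplete M d \<and> z \<in> M"

text \<open>Lip_0(M,Y): Lipschitz maps on M vanishing at the base point (taken extensional,
  i.e. zero outside M, so that each map on M is represented exactly once).\<close>
definition Lip0 :: "'a set \<Rightarrow> ('a \<Rightarrow> 'a \<Rightarrow> real) \<Rightarrow> 'a \<Rightarrow> ('a \<Rightarrow> 'b::real_normed_vector) set" where
  "Lip0 M d z = {f. (\<forall>x. x \<notin> M \<longrightarrow> f x = 0) \<and> f z = 0 \<and>
      (\<exists>L. \<forall>p\<in>M. \<forall>q\<in>M. norm (f p - f q) \<le> L * d p q)}"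

definition lip_norm :: "'a set \<Rightarrow> ('a \<Rightarrow> 'a \<Rightarrow> real) \<Rightarrow> ('a \<Rightarrow> 'b::real_normed_vector) \<Rightarrow> real" where
  "lip_norm M d f = Sup ({0} \<union> {norm (f p - f q) / d p q | p q. p \<in> M \<and> q \<in> M \<and> p \<noteq> q})"

definition attains_norm_toward :: "'a set \<Rightarrow> ('a \<Rightarrow> 'a \<Rightarrow> real) \<Rightarrow> ('a \<Rightarrow> 'b::real_normed_vector) \<Rightarrow> 'b \<Rightarrow> bool" where
  "attains_norm_toward M d f y \<longleftrightarrow>
     (\<exists>p q. (\<forall>n. p n \<in> M \<and> q n \<in> M \<and> p n \<noteq> q n) \<and>
       ((\<lambda>n. (1 / d (p n) (q n)) *\<^sub>R (f (p n) - f (q n))) \<longlonglongrightarrow> y) \<and>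
       norm y = lip_norm M d f)"

definition NA :: "'a set \<Rightarrow> ('a \<Rightarrow> 'a \<Rightarrow> real) \<Rightarrow> 'a \<Rightarrow> ('a \<Rightarrow> 'b::real_normed_vector) set" where
  "NA M d z = {f \<in> Lip0 M d z. \<exists>y. attains_norm_toward M d f y}"

end

theory Submission
  imports Defs
begin

text \<open>Glue to \<open>M\<close> countably many points \<open>s\<^sub>n\<close>, each at distance 1 from the base point,
  with every distance to or between them measured through the base point. Riesz's lemma gives
  unit vectors \<open>w\<^sub>n\<close> in \<open>Y\<close> at distance at least 1/2 from the span of \<open>w\<^sub>0, \<dots>, w\<^sub>n\<^sub>-\<^sub>1\<close>.
  Let \<open>f\<close> vanish on \<open>M\<close> and send \<open>s\<^sub>n\<close> to \<open>r\<^sub>n w\<^sub>n\<close> with \<open>r\<^sub>n\<close> increasing to 1, so that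
  \<open>\<parallel>f\<parallel> = 1\<close>. Every difference quotient of \<open>f\<close> has the form \<open>c w\<^sub>N + u\<close> with \<open>u\<close> in the span of
  the earlier \<open>w\<^sub>n\<close>, norm at most \<open>r\<^sub>N\<close> and \<open>\<bar>c\<bar>\<close> at least half its norm. Difference quotients
  whose norms tend to 1 must therefore involve ever larger \<open>N\<close>, and the separation of the \<open>w\<^sub>n\<close>
  keeps them a fixed distance apart, so they do not converge.\<close>

lemma norm_scaleR_add_ge:
  fixes w :: "'b::real_normed_vector"
  assumes "subspace V" "u \<in> V" "\<And>v. v \<in> V \<Longrightarrow> \<theta> \<le> norm (w - v)"
  shows "\<bar>c\<bar> * \<theta> \<le> norm (c *\<^sub>R w + u)"
proof (cases "c = 0")
  case True
  then show ?thesis by simp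
next
  case False
  have "- ((1 / c) *\<^sub>R u) \<in> V"
    using assms(1,2) by (simp add: subspace_neg subspace_scale)
  then have "\<theta> \<le> norm (w + (1 / c) *\<^sub>R u)"
    using assms(3) by fastforce
  then have "\<bar>c\<bar> * \<theta> \<le> norm (c *\<^sub>R (w + (1 / c) *\<^sub>R u))"
    by (simp add: mult_left_mono)
  also have "c *\<^sub>R (w + (1 / c) *\<^sub>R u) = c *\<^sub>R w + u"
    using False by (simp add: scaleR_add_right)
  finally show ?thesis .
qed

lemma closed_span_insert:
  fixes a :: "'b::real_normed_vector"
  assumes closed: "closed (span S)"
  shows "closed (span (insert a S))"
proof (cases "a \<in> span S")
  case True
  then show ?thesis
    using closed by (simp add: span_redundant)
next
  case False
  define \<delta> where "\<delta> = infdist a (span S)"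
  have "\<delta> > 0"
    unfolding \<delta>_def using infdist_pos_not_in_closed closed False span_zero by blast
  have coeff_bound: "\<bar>t\<bar> * \<delta> \<le> norm (t *\<^sub>R a + v)" if "v \<in> span S" for t v
    using norm_scaleR_add_ge[OF subspace_span that] infdist_le[of _ "span S" a]
    unfolding \<delta>_def by (simp add: dist_norm)
  show ?thesis
    unfolding closed_sequential_limits
  proof (intro allI impI, elim conjE)
    fix y l
    assume y: "\<forall>n. y n \<in> span (insert a S)" and "y \<longlonglongrightarrow> l"
    obtain t where t: "\<And>n. y n - t n *\<^sub>R a \<in> span S"
      using y unfolding span_insert by simp metis
    have "Cauchy t"
    proof (rule metric_CauchyI)
      fix e :: real
      assume "e > 0"
      then have "e * \<delta> > 0"
        using \<open>\<delta> > 0\<close> by simp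
      then obtain N where N: "\<And>m n. m \<ge> N \<Longrightarrow> n \<ge> N \<Longrightarrow> dist (y m) (y n) < e * \<delta>"
        using metric_CauchyD[OF LIMSEQ_imp_Cauchy[OF \<open>y \<longlonglongrightarrow> l\<close>]] by meson
      have "dist (t m) (t n) < e" if "m \<ge> N" "n \<ge> N" for m n
      proof -
        have "(y m - t m *\<^sub>R a) - (y n - t n *\<^sub>R a) \<in> span S"
          using t by (simp add: span_diff)
        from coeff_bound[OF this, of "t m - t n"]
        have "\<bar>t m - t n\<bar> * \<delta> \<le> norm (y m - y n)"
          by (simp add: algebra_simps)
        also have "\<dots> < e * \<delta>"
          using N[OF that] by (simp add: dist_norm)
        finally show ?thesis
          using \<open>\<delta> > 0\<close> by (simp add: dist_real_def)
      qed
      then show "\<exists>N. \<forall>m\<ge>N. \<forall>n\<ge>N. dist (t m) (t n) < e"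
        by blast
    qed
    then obtain T where "t \<longlonglongrightarrow> T"
      using Cauchy_convergent_iff convergent_def by blast
    then have "(\<lambda>n. y n - t n *\<^sub>R a) \<longlonglongrightarrow> l - T *\<^sub>R a"
      using \<open>y \<longlonglongrightarrow> l\<close> by (intro tendsto_intros)
    then have "l - T *\<^sub>R a \<in> span S"
      by (rule closed_sequentially[OF closed t])
    then show "l \<in> span (insert a S)"
      unfolding span_insert by blast
  qed
qed

lemma closed_span_finite:
  fixes S :: "'b::real_normed_vector set"
  assumes "finite S"
  shows "closed (span S)"
  using assms by (induction rule: finite_induct) (auto intro: closed_span_insert)

lemma riesz_lemma:
  fixes V :: "'b::real_normed_vector set"
  assumes "subspace V" "closed V" "V \<noteq> UNIV" "0 < \<theta>" "\<theta> < 1"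
  obtains w where "norm w = 1" "\<And>v. v \<in> V \<Longrightarrow> \<theta> \<le> norm (w - v)"
proof -
  obtain x where "x \<notin> V"
    using assms(3) by blast
  define \<delta> where "\<delta> = infdist x V"
  have "\<delta> > 0"
    unfolding \<delta>_def using infdist_pos_not_in_closed assms(1,2) \<open>x \<notin> V\<close> subspace_0 by blast
  moreover have "\<delta> = (INF v\<in>V. dist x v)"
    unfolding \<delta>_def using assms(1) subspace_0 by (intro infdist_notempty) blast
  ultimately have "(INF v\<in>V. dist x v) < \<delta> / \<theta>"
    using assms(4,5) by (simp add: field_simps)
  then obtain v\<^sub>0 where "v\<^sub>0 \<in> V" "dist x v\<^sub>0 < \<delta> / \<theta>"
    using subspace_0[OF assms(1)]
    by (subst (asm) cINF_less_iff) (auto intro: bdd_belowI[where m = 0])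
  define \<rho> where "\<rho> = norm (x - v\<^sub>0)"
  have "\<rho> > 0"
    using \<open>x \<notin> V\<close> \<open>v\<^sub>0 \<in> V\<close> unfolding \<rho>_def by auto
  show ?thesis
  proof
    show "norm ((1 / \<rho>) *\<^sub>R (x - v\<^sub>0)) = 1"
      using \<open>\<rho> > 0\<close> unfolding \<rho>_def by simp
    fix v
    assume "v \<in> V"
    then have "v\<^sub>0 + \<rho> *\<^sub>R v \<in> V"
      using \<open>v\<^sub>0 \<in> V\<close> assms(1) by (simp add: subspace_add subspace_scale)
    then have "\<delta> \<le> norm (x - (v\<^sub>0 + \<rho> *\<^sub>R v))"
      unfolding \<delta>_def dist_norm[symmetric] by (rule infdist_le)
    also have "x - (v\<^sub>0 + \<rho> *\<^sub>R v) = \<rho> *\<^sub>R ((1 / \<rho>) *\<^sub>R (x - v\<^sub>0) - v)"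
      using \<open>\<rho> > 0\<close> by (simp add: algebra_simps)
    also have "norm \<dots> = \<rho> * norm ((1 / \<rho>) *\<^sub>R (x - v\<^sub>0) - v)"
      using \<open>\<rho> > 0\<close> by simp
    finally have "\<delta> / \<rho> \<le> norm ((1 / \<rho>) *\<^sub>R (x - v\<^sub>0) - v)"
      using \<open>\<rho> > 0\<close> by (simp add: pos_divide_le_eq mult.commute)
    moreover have "\<theta> < \<delta> / \<rho>"
      using \<open>dist x v\<^sub>0 < \<delta> / \<theta>\<close> \<open>\<rho> > 0\<close> assms(4) unfolding \<rho>_def by (simp add: dist_norm field_simps)
    ultimately show "\<theta> \<le> norm ((1 / \<rho>) *\<^sub>R (x - v\<^sub>0) - v)"
      by linarith
  qed
qed

fun greedy_seq :: "('a set \<Rightarrow> 'a \<Rightarrow> bool) \<Rightarrow> nat \<Rightarrow> 'a" where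
  "greedy_seq P n = (SOME x. P (greedy_seq P ` {..<n}) x)"

declare greedy_seq.simps [simp del]

lemma greedy_seq:
  assumes "\<And>S. finite S \<Longrightarrow> \<exists>x. P S x"
  shows "P (greedy_seq P ` {..<n}) (greedy_seq P n)"
  using someI_ex[OF assms[OF finite_imageI[OF finite_lessThan]]] greedy_seq.simps[of P n] by metis

lemma riesz_sequence:
  assumes "\<And>S :: 'b::real_normed_vector set. finite S \<Longrightarrow> span S \<noteq> UNIV" "0 < \<theta>" "\<theta> < 1"
  obtains w :: "nat \<Rightarrow> 'b::real_normed_vector"
  where "\<And>n. norm (w n) = 1" "\<And>n v. v \<in> span (w ` {..<n}) \<Longrightarrow> \<theta> \<le> norm (w n - v)"
proof -
  define P where "P S x \<longleftrightarrow> norm x = 1 \<and> (\<forall>v\<in>span S. \<theta> \<le> norm (x - v))" for S and x :: 'b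
  have "\<exists>x. P S x" if "finite S" for S
    using riesz_lemma[OF subspace_span closed_span_finite[OF that] assms(1)[OF that] assms(2,3)]
    unfolding P_def by metis
  then show ?thesis
    using that greedy_seq[of P] unfolding P_def by blast
qed

lemma mcomplete_isometric_image:
  assumes "Metric_space M d" "Metric_space.mcomplete M d" "Metric_space (f ` M) d'"
    and isometric: "\<And>x y. x \<in> M \<Longrightarrow> y \<in> M \<Longrightarrow> d' (f x) (f y) = d x y"
  shows "Metric_space.mcomplete (f ` M) d'"
proof -
  interpret M: Metric_space M d by fact
  interpret fM: Metric_space "f ` M" d' by fact
  show ?thesis
    unfolding fM.mcomplete_def
  proof (intro allI impI)
    fix \<sigma>
    assume \<sigma>: "fM.MCauchy \<sigma>"
    define \<tau> where "\<tau> n = inv_into M f (\<sigma> n)" for n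
    have \<sigma>_in: "\<sigma> n \<in> f ` M" for n
      using \<sigma> unfolding fM.MCauchy_def by blast
    then have \<tau>: "\<tau> n \<in> M" "f (\<tau> n) = \<sigma> n" for n
      unfolding \<tau>_def by (auto intro: inv_into_into f_inv_into_f)
    have dist_\<tau>: "d (\<tau> m) (\<tau> n) = d' (\<sigma> m) (\<sigma> n)" for m n
      using isometric \<tau> by metis
    have "M.MCauchy \<tau>"
      using \<sigma> \<tau>(1) unfolding M.MCauchy_def fM.MCauchy_def by (auto simp: dist_\<tau>)
    then obtain x where "limitin M.mtopology \<tau> x sequentially"
      using assms(2) unfolding M.mcomplete_def by blast
    moreover have "d (\<tau> n) x = d' (\<sigma> n) (f x)" if "x \<in> M" for n
      using isometric \<tau> that by metis
    ultimately have "limitin fM.mtopology \<sigma> (f x) sequentially"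
      unfolding M.limit_metric_sequentially fM.limit_metric_sequentially by (simp add: \<sigma>_in) blast
    then show "\<exists>y. limitin fM.mtopology \<sigma> y sequentially" ..
  qed
qed

lemma mcomplete_uniformly_discrete:
  assumes "Metric_space M d" "0 < \<delta>" "\<And>x y. x \<in> M \<Longrightarrow> y \<in> M \<Longrightarrow> x \<noteq> y \<Longrightarrow> \<delta> \<le> d x y"
  shows "Metric_space.mcomplete M d"
proof -
  interpret Metric_space M d by fact
  show ?thesis
    unfolding mcomplete_def
  proof (intro allI impI)
    fix \<sigma>
    assume \<sigma>: "MCauchy \<sigma>"
    then obtain N where "\<And>n. N \<le> n \<Longrightarrow> d (\<sigma> n) (\<sigma> N) < \<delta>"
      unfolding MCauchy_def using assms(2) by (meson order_refl)
    moreover have "range \<sigma> \<subseteq> M"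
      using \<sigma> unfolding MCauchy_def by blast
    ultimately have const: "\<sigma> n = \<sigma> N" if "N \<le> n" for n
      using assms(3) that by (fastforce simp: not_le[symmetric])
    have "limitin mtopology \<sigma> (\<sigma> N) sequentially"
      using \<open>range \<sigma> \<subseteq> M\<close>
      by (intro limitin_eventually eventually_sequentiallyI[of N] const) auto
    then show "\<exists>x. limitin mtopology \<sigma> x sequentially" ..
  qed
qed

definition spoke_space :: "'a set \<Rightarrow> ('a + nat) set" where
  "spoke_space M = Inl ` M \<union> range Inr"

fun spoke_dist :: "('a \<Rightarrow> 'a \<Rightarrow> real) \<Rightarrow> 'a \<Rightarrow> 'a + nat \<Rightarrow> 'a + nat \<Rightarrow> real" where
  "spoke_dist d z (Inl a) (Inl b) = d a b"
| "spoke_dist d z (Inl a) (Inr n) = d a z + 1"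
| "spoke_dist d z (Inr n) (Inl a) = d a z + 1"
| "spoke_dist d z (Inr m) (Inr n) = (if m = n then 0 else 2)"

lemma Metric_space_spoke_dist:
  assumes "Metric_space M d" "z \<in> M"
  shows "Metric_space (spoke_space M) (spoke_dist d z)"
proof -
  interpret Metric_space M d by fact
  show ?thesis
  proof
    fix x y
    show "0 \<le> spoke_dist d z x y" "spoke_dist d z x y = spoke_dist d z y x"
      by (cases x; cases y; simp add: commute)+
  next
    fix x y
    assume "x \<in> spoke_space M" "y \<in> spoke_space M"
    then show "spoke_dist d z x y = 0 \<longleftrightarrow> x = y"
      unfolding spoke_space_def by (cases x; cases y; auto simp: add_nonneg_eq_0_iff)
  next
    fix x y u
    assume "x \<in> spoke_space M" "y \<in> spoke_space M" "u \<in> spoke_space M"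
    then show "spoke_dist d z x u \<le> spoke_dist d z x y + spoke_dist d z y u"
      unfolding spoke_space_def using assms(2)
      by (cases x; cases y; cases u)
        (auto intro: triangle triangle' add_increasing, metis add.commute triangle'')
  qed
qed

lemma mcomplete_spoke_dist:
  assumes "Metric_space M d" "Metric_space.mcomplete M d" "z \<in> M"
  shows "Metric_space.mcomplete (spoke_space M) (spoke_dist d z)"
proof -
  interpret Metric_space "spoke_space M" "spoke_dist d z"
    using Metric_space_spoke_dist[OF assms(1,3)] .
  have submetric: "Submetric (spoke_space M) (spoke_dist d z) A" if "A \<subseteq> spoke_space M" for A
    using that by unfold_locales
  have "Metric_space.mcomplete (Inl ` M) (spoke_dist d z)"
    by (rule mcomplete_isometric_image[OF assms(1,2) subspace]) (auto simp: spoke_space_def)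
  moreover have "Metric_space.mcomplete (range Inr) (spoke_dist d z)"
    by (rule mcomplete_uniformly_discrete[OF subspace, of _ 2]) (auto simp: spoke_space_def split: if_splits)
  moreover have "Inl ` M \<subseteq> spoke_space M" "range Inr \<subseteq> spoke_space M"
    by (auto simp: spoke_space_def)
  ultimately have "Metric_space.mcomplete (Inl ` M \<union> range Inr) (spoke_dist d z)"
    using mcomplete_Un(2) submetric by blast
  then show ?thesis
    by (simp add: spoke_space_def)
qed

definition slope :: "('a \<Rightarrow> 'a \<Rightarrow> real) \<Rightarrow> ('a \<Rightarrow> 'b::real_normed_vector) \<Rightarrow> 'a \<Rightarrow> 'a \<Rightarrow> 'b" where
  "slope d f p q = (1 / d p q) *\<^sub>R (f p - f q)"

lemma (in Metric_space) norm_slope: "norm (slope d f p q) = norm (f p - f q) / d p q"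
  by (simp add: slope_def)

lemma difference_quotient_le:
  assumes "Metric_space M d" "\<And>p q. p \<in> M \<Longrightarrow> q \<in> M \<Longrightarrow> norm (f p - f q) \<le> L * d p q"
    and "p \<in> M" "q \<in> M" "p \<noteq> q"
  shows "norm (f p - f q) / d p q \<le> L"
  using assms by (simp add: Metric_space.mdist_pos_less pos_divide_le_eq)

lemma lip_norm_le:
  assumes "Metric_space M d" "0 \<le> L" "\<And>p q. p \<in> M \<Longrightarrow> q \<in> M \<Longrightarrow> norm (f p - f q) \<le> L * d p q"
  shows "lip_norm M d f \<le> L"
  unfolding lip_norm_def
  using assms(2) difference_quotient_le[OF assms(1,3)] by (intro cSup_least) auto

lemma norm_slope_le_lip_norm:
  assumes "Metric_space M d" "0 \<le> L" "\<And>p q. p \<in> M \<Longrightarrow> q \<in> M \<Longrightarrow> norm (f p - f q) \<le> L * d p q"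
    and "p \<in> M" "q \<in> M" "p \<noteq> q"
  shows "norm (slope d f p q) \<le> lip_norm M d f"
  unfolding lip_norm_def Metric_space.norm_slope[OF assms(1)]
proof (rule cSup_upper)
  show "norm (f p - f q) / d p q \<in> {0} \<union> {norm (f p - f q) / d p q |p q. p \<in> M \<and> q \<in> M \<and> p \<noteq> q}"
    using assms(4-6) by blast
  show "bdd_above ({0} \<union> {norm (f p - f q) / d p q |p q. p \<in> M \<and> q \<in> M \<and> p \<noteq> q})"
    using assms(2) difference_quotient_le[OF assms(1,3)] by (intro bdd_aboveI[where M = L]) auto
qed

definition spoke_map :: "(nat \<Rightarrow> 'b::real_normed_vector) \<Rightarrow> 'a + nat \<Rightarrow> 'b" where
  "spoke_map v = case_sum (\<lambda>_. 0) v"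

lemma spoke_map_lipschitz:
  assumes "Metric_space M d" "z \<in> M" "\<And>n. norm (v n) \<le> 1" "p \<in> spoke_space M" "q \<in> spoke_space M"
  shows "norm (spoke_map v p - spoke_map v q) \<le> spoke_dist d z p q"
proof -
  have "norm (v m - v n) \<le> 2" for m n
    using norm_triangle_ineq4[of "v m" "v n"] assms(3)[of m] assms(3)[of n] by linarith
  then show ?thesis
    using assms Metric_space.nonneg[OF assms(1)] unfolding spoke_space_def spoke_map_def
    by (cases p; cases q) (auto intro: order_trans[OF _ le_add_same_cancel2[THEN iffD2]])
qed

lemma spoke_map_Lip0:
  assumes "Metric_space M d" "z \<in> M" "\<And>n. norm (v n) \<le> 1"
  shows "spoke_map v \<in> Lip0 (spoke_space M) (spoke_dist d z) (Inl z)"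
  unfolding Lip0_def
proof (intro CollectI conjI allI impI exI[of _ 1])
  fix x
  assume "x \<notin> spoke_space M"
  then show "spoke_map v x = 0"
    by (cases x) (auto simp: spoke_map_def spoke_space_def)
qed (use spoke_map_lipschitz[OF assms] in \<open>auto simp: spoke_map_def\<close>)

context
  fixes M :: "'a set" and d :: "'a \<Rightarrow> 'a \<Rightarrow> real" and z :: 'a
    and w :: "nat \<Rightarrow> 'b::real_normed_vector" and r :: "nat \<Rightarrow> real" and \<theta> :: real
  assumes M: "Metric_space M d" "z \<in> M"
    and w_norm: "\<And>n. norm (w n) = 1"
    and w_sep: "\<And>n v. v \<in> span (w ` {..<n}) \<Longrightarrow> \<theta> \<le> norm (w n - v)"
    and \<theta>_pos: "0 < \<theta>"
    and r_mono: "mono r" and r_nonneg: "\<And>n. 0 \<le> r n" and r_less_1: "\<And>n. r n < 1"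
    and r_lim: "r \<longlonglongrightarrow> 1"
begin

abbreviation nonattaining_map :: "'a + nat \<Rightarrow> 'b" where
  "nonattaining_map \<equiv> spoke_map (\<lambda>n. r n *\<^sub>R w n)"

lemma norm_spoke_values_le_1: "norm (r n *\<^sub>R w n) \<le> 1"
  using r_nonneg[of n] r_less_1[of n] by (simp add: w_norm)

lemma nonattaining_map_Lip0: "nonattaining_map \<in> Lip0 (spoke_space M) (spoke_dist d z) (Inl z)"
  using spoke_map_Lip0[OF M norm_spoke_values_le_1] .

lemma lip_norm_nonattaining_map: "lip_norm (spoke_space M) (spoke_dist d z) nonattaining_map = 1"
proof (rule antisym)
  have lipschitz: "norm (nonattaining_map p - nonattaining_map q) \<le> 1 * spoke_dist d z p q"
    if "p \<in> spoke_space M" "q \<in> spoke_space M" for p q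
    using spoke_map_lipschitz[OF M norm_spoke_values_le_1 that] by simp
  then show "lip_norm (spoke_space M) (spoke_dist d z) nonattaining_map \<le> 1"
    by (intro lip_norm_le[OF Metric_space_spoke_dist[OF M]]) auto
  have "r n \<le> lip_norm (spoke_space M) (spoke_dist d z) nonattaining_map" for n
  proof -
    have "r n = norm (slope (spoke_dist d z) nonattaining_map (Inr n) (Inl z))"
      using Metric_space.mdist_zero[OF M] r_nonneg[of n] by (simp add: slope_def spoke_map_def w_norm)
    also have "\<dots> \<le> lip_norm (spoke_space M) (spoke_dist d z) nonattaining_map"
      using M(2) by (intro norm_slope_le_lip_norm[OF Metric_space_spoke_dist[OF M] _ lipschitz])
        (auto simp: spoke_space_def)
    finally show ?thesis .
  qed
  then show "1 \<le> lip_norm (spoke_space M) (spoke_dist d z) nonattaining_map"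
    using LIMSEQ_le_const2[OF r_lim] by blast
qed

lemma slope_nonattaining_map_decomposition:
  assumes "p \<in> spoke_space M" "q \<in> spoke_space M" "p \<noteq> q"
  obtains N c u
  where "slope (spoke_dist d z) nonattaining_map p q = c *\<^sub>R w N + u" "u \<in> span (w ` {..<N})"
    and "norm (slope (spoke_dist d z) nonattaining_map p q) \<le> r N"
    and "norm (slope (spoke_dist d z) nonattaining_map p q) \<le> 2 * \<bar>c\<bar>"
proof -
  let ?s = "slope (spoke_dist d z) nonattaining_map p q"
  note decomposition = that
  have one_spoke: thesis if "?s = c *\<^sub>R w n" "\<bar>c\<bar> \<le> r n" for c n
    using decomposition[where N = n and c = c and u = 0] that by (simp add: w_norm span_zero)
  have spoke_to_M: "\<bar>t * r n / (d a z + 1)\<bar> \<le> r n" if "\<bar>t\<bar> = 1" for a n and t :: real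
    using Metric_space.nonneg[OF M(1), of a z] r_nonneg[of n] that
    by (simp add: abs_mult divide_le_eq algebra_simps)
  show ?thesis
  proof (cases p)
    case (Inl a)
    show ?thesis
    proof (cases q)
      case (Inl b)
      then have "?s = 0 *\<^sub>R w 0"
        using \<open>p = Inl a\<close> by (simp add: slope_def spoke_map_def)
      then show ?thesis
        using one_spoke[of 0 0] r_nonneg[of 0] by simp
    next
      case (Inr n)
      then have "?s = (- 1 * r n / (d a z + 1)) *\<^sub>R w n"
        using \<open>p = Inl a\<close> by (simp add: slope_def spoke_map_def)
      then show ?thesis
        by (rule one_spoke[OF _ spoke_to_M]) simp
    qed
  next
    case (Inr m)
    show ?thesis
    proof (cases q)
      case (Inl a)
      then have "?s = (1 * r m / (d a z + 1)) *\<^sub>R w m"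
        using \<open>p = Inr m\<close> by (simp add: slope_def spoke_map_def)
      then show ?thesis
        by (rule one_spoke[OF _ spoke_to_M]) simp
    next
      case (Inr n)
      then have "m \<noteq> n"
        using \<open>p = Inr m\<close> assms(3) by blast
      then have s: "?s = (r m / 2) *\<^sub>R w m - (r n / 2) *\<^sub>R w n"
        using \<open>p = Inr m\<close> Inr by (simp add: slope_def spoke_map_def scaleR_diff_right)
      have norm_s: "norm ?s \<le> r m / 2 + r n / 2"
        unfolding s using norm_triangle_ineq4[of "(r m / 2) *\<^sub>R w m" "(r n / 2) *\<^sub>R w n"]
        by (simp add: w_norm r_nonneg)
      consider "m < n" | "n < m"
        using \<open>m \<noteq> n\<close> by linarith
      then show ?thesis
      proof cases
        case 1
        show ?thesis
        proof (rule decomposition)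
          show "?s = (- (r n / 2)) *\<^sub>R w n + (r m / 2) *\<^sub>R w m"
            unfolding s by simp
          show "(r m / 2) *\<^sub>R w m \<in> span (w ` {..<n})"
            using 1 by (intro span_scale span_base) auto
          show "norm ?s \<le> r n" "norm ?s \<le> 2 * \<bar>- (r n / 2)\<bar>"
            using norm_s monoD[OF r_mono, of m n] 1 r_nonneg[of n] by simp_all
        qed
      next
        case 2
        show ?thesis
        proof (rule decomposition)
          show "?s = (r m / 2) *\<^sub>R w m + (- (r n / 2)) *\<^sub>R w n"
            unfolding s by simp
          show "(- (r n / 2)) *\<^sub>R w n \<in> span (w ` {..<m})"
            using 2 by (intro span_scale span_base) auto
          show "norm ?s \<le> r m" "norm ?s \<le> 2 * \<bar>r m / 2\<bar>"
            using norm_s monoD[OF r_mono, of n m] 2 r_nonneg[of m] by simp_all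
        qed
      qed
    qed
  qed
qed

lemma slope_nonattaining_map_level:
  assumes "p \<in> spoke_space M" "q \<in> spoke_space M" "p \<noteq> q"
  obtains N
  where "slope (spoke_dist d z) nonattaining_map p q \<in> span (w ` {..N})"
    and "norm (slope (spoke_dist d z) nonattaining_map p q) \<le> r N"
    and "\<And>x. x \<in> span (w ` {..<N}) \<Longrightarrow>
           \<theta> / 2 * norm (slope (spoke_dist d z) nonattaining_map p q)
             \<le> norm (slope (spoke_dist d z) nonattaining_map p q - x)"
proof -
  let ?s = "slope (spoke_dist d z) nonattaining_map p q"
  obtain N c u where s: "?s = c *\<^sub>R w N + u" and u: "u \<in> span (w ` {..<N})"
    and "norm ?s \<le> r N" and norm_s: "norm ?s \<le> 2 * \<bar>c\<bar>"
    using slope_nonattaining_map_decomposition[OF assms] .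
  show ?thesis
  proof (rule that)
    have "span (w ` {..<N}) \<subseteq> span (w ` {..N})"
      by (intro span_mono image_mono) auto
    moreover have "c *\<^sub>R w N \<in> span (w ` {..N})"
      by (intro span_scale span_base) auto
    ultimately show "?s \<in> span (w ` {..N})"
      unfolding s using u by (blast intro: span_add)
    show "norm ?s \<le> r N" by fact
    fix x
    assume "x \<in> span (w ` {..<N})"
    have "\<theta> / 2 * norm ?s \<le> \<bar>c\<bar> * \<theta>"
      using mult_left_mono[OF norm_s, of "\<theta> / 2"] \<theta>_pos by simp
    also have "\<dots> \<le> norm (c *\<^sub>R w N + (u - x))"
      using u \<open>x \<in> span (w ` {..<N})\<close>
      by (intro norm_scaleR_add_ge[OF subspace_span span_diff w_sep])
    also have "c *\<^sub>R w N + (u - x) = ?s - x"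
      unfolding s by simp
    finally show "\<theta> / 2 * norm ?s \<le> norm (?s - x)" .
  qed
qed

lemma slope_nonattaining_map_far_from_span:
  assumes "p \<in> spoke_space M" "q \<in> spoke_space M" "p \<noteq> q"
    and "x \<in> span (w ` {..N})" "r N < norm (slope (spoke_dist d z) nonattaining_map p q)"
  shows "\<theta> / 2 * norm (slope (spoke_dist d z) nonattaining_map p q)
           \<le> norm (slope (spoke_dist d z) nonattaining_map p q - x)"
proof -
  obtain N' where N': "norm (slope (spoke_dist d z) nonattaining_map p q) \<le> r N'"
    and sep: "\<And>x. x \<in> span (w ` {..<N'}) \<Longrightarrow>
      \<theta> / 2 * norm (slope (spoke_dist d z) nonattaining_map p q)
        \<le> norm (slope (spoke_dist d z) nonattaining_map p q - x)"
    using slope_nonattaining_map_level[OF assms(1-3)] by blast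
  have "N < N'"
  proof (rule ccontr)
    assume "\<not> N < N'"
    then have "r N' \<le> r N"
      using r_mono by (simp add: monoD)
    with N' assms(5) show False
      by linarith
  qed
  then have "span (w ` {..N}) \<subseteq> span (w ` {..<N'})"
    by (intro span_mono image_mono) auto
  then show ?thesis
    using sep assms(4) by blast
qed

lemma nonattaining_map_not_NA: "nonattaining_map \<notin> NA (spoke_space M) (spoke_dist d z) (Inl z)"
proof
  assume "nonattaining_map \<in> NA (spoke_space M) (spoke_dist d z) (Inl z)"
  then obtain y where "attains_norm_toward (spoke_space M) (spoke_dist d z) nonattaining_map y"
    unfolding NA_def by blast
  then obtain p q where pq: "\<forall>n. p n \<in> spoke_space M \<and> q n \<in> spoke_space M \<and> p n \<noteq> q n"
    and lim: "(\<lambda>n. slope (spoke_dist d z) nonattaining_map (p n) (q n)) \<longlonglongrightarrow> y" and "norm y = 1"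
    unfolding attains_norm_toward_def lip_norm_nonattaining_map slope_def by blast
  then have pq: "p n \<in> spoke_space M" "q n \<in> spoke_space M" "p n \<noteq> q n" for n
    by blast+
  define Q where "Q n = slope (spoke_dist d z) nonattaining_map (p n) (q n)" for n
  have "Q \<longlonglongrightarrow> y"
    using lim unfolding Q_def .
  then have "(\<lambda>n. norm (Q n)) \<longlonglongrightarrow> 1"
    using tendsto_norm \<open>norm y = 1\<close> by fastforce
  have "\<theta> / 4 > 0"
    using \<theta>_pos by simp
  then obtain K where K: "\<And>m n. K \<le> m \<Longrightarrow> K \<le> n \<Longrightarrow> dist (Q m) (Q n) < \<theta> / 4"
    using metric_CauchyD[OF LIMSEQ_imp_Cauchy[OF \<open>Q \<longlonglongrightarrow> y\<close>]] by meson
  obtain K' where K': "\<And>n. K' \<le> n \<Longrightarrow> 1 / 2 < norm (Q n)"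
    using order_tendstoD(1)[OF \<open>(\<lambda>n. norm (Q n)) \<longlonglongrightarrow> 1\<close>, of "1 / 2"]
    unfolding eventually_sequentially by auto
  define k where "k = max K K'"
  obtain N where N: "Q k \<in> span (w ` {..N})"
    using slope_nonattaining_map_level[OF pq[of k]] unfolding Q_def by blast
  obtain K'' where K'': "\<And>n. K'' \<le> n \<Longrightarrow> r N < norm (Q n)"
    using order_tendstoD(1)[OF \<open>(\<lambda>n. norm (Q n)) \<longlonglongrightarrow> 1\<close> r_less_1[of N]]
    unfolding eventually_sequentially by auto
  define j where "j = max k K''"
  have "k \<le> j" "r N < norm (Q j)"
    using K''[of j] unfolding j_def by auto
  then have "\<theta> / 2 * norm (Q j) \<le> norm (Q j - Q k)"
    using slope_nonattaining_map_far_from_span[OF pq[of j] N(1)] unfolding Q_def by blast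
  moreover have "\<theta> / 4 < \<theta> / 2 * norm (Q j)"
    using K'[of j] \<open>k \<le> j\<close> \<theta>_pos unfolding k_def by simp
  moreover have "norm (Q j - Q k) < \<theta> / 4"
    using K[of j k] \<open>k \<le> j\<close> unfolding k_def by (simp add: dist_norm)
  ultimately show False
    by linarith
qed

end

theorem corollary2p9:
  fixes M :: "'a set" and d :: "'a \<Rightarrow> 'a \<Rightarrow> real" and z :: 'a
  assumes "complete_pointed_mspace M d z"
    and "\<And>S :: 'b::banach set. finite S \<Longrightarrow> span S \<noteq> UNIV"
  shows "\<exists>(M' :: ('a + nat) set) d'.
           complete_pointed_mspace M' d' (Inl z) \<and>
           (NA M' d' (Inl z) :: ('a + nat \<Rightarrow> 'b) set) \<subset> Lip0 M' d' (Inl z) \<and>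
           countable (M' - Inl ` M) \<and>
           Inl ` M \<subseteq> M' \<and> (\<forall>x\<in>M. \<forall>y\<in>M. d' (Inl x) (Inl y) = d x y)"
proof -
  have M: "Metric_space M d" "Metric_space.mcomplete M d" "z \<in> M"
    using assms(1) unfolding complete_pointed_mspace_def by auto
  obtain w :: "nat \<Rightarrow> 'b" where w: "\<And>n. norm (w n) = 1"
    "\<And>n v. v \<in> span (w ` {..<n}) \<Longrightarrow> 1 / 2 \<le> norm (w n - v)"
    using riesz_sequence[OF assms(2), of "1 / 2"] by auto
  define r where "r n = 1 - inverse (real (Suc n))" for n
  have r: "mono r" "\<And>n. 0 \<le> r n" "\<And>n. r n < 1" "r \<longlonglongrightarrow> 1"
    unfolding mono_def r_def
    using tendsto_diff[OF tendsto_const LIMSEQ_inverse_real_of_nat, of 1]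
    by (auto intro!: le_imp_inverse_le simp: inverse_le_1_iff)
  let ?f = "nonattaining_map w r :: 'a + nat \<Rightarrow> 'b"
  have "?f \<in> Lip0 (spoke_space M) (spoke_dist d z) (Inl z)"
    and "?f \<notin> NA (spoke_space M) (spoke_dist d z) (Inl z)"
    using nonattaining_map_Lip0[OF M(1,3) w _ r] nonattaining_map_not_NA[OF M(1,3) w _ r] by simp_all
  then have "(NA (spoke_space M) (spoke_dist d z) (Inl z) :: ('a + nat \<Rightarrow> 'b) set)
      \<subset> Lip0 (spoke_space M) (spoke_dist d z) (Inl z)"
    unfolding NA_def by blast
  moreover have "countable (spoke_space M - Inl ` M)"
    by (rule countable_subset[of _ "range Inr"]) (auto simp: spoke_space_def)
  ultimately show ?thesis
    using Metric_space_spoke_dist[OF M(1,3)] mcomplete_spoke_dist[OF M] M(3)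
    by (intro exI[of _ "spoke_space M"] exI[of _ "spoke_dist d z"])
      (auto simp: complete_pointed_mspace_def spoke_space_def)
qed

end
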